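(* Let $G$ be a group generated by $r$ elements, let $\pi:(0,1]\to(0,1]$ be a non-decreasing function with $\pi(\gamma)\to0$ as $\gamma\to0$, let $M=(\mu_n)_{n=1}^\infty$ be a sequence of probability measures on $G$ that detects index uniformly at rate $\pi$, and suppose that $\textup{dc}_M(G)\ge\alpha>0$. Then $G$ has an abelian subgroup of index bounded by a quantity depending only on $r$, $\pi$ and $\alpha$.
   Context: A sequence $M=(\mu_n)$ of probability measures on $G$ detects index uniformly at rate $\pi$ if for every $\varepsilon>0$ there exists $N=N(\varepsilon)\in\mathbb{N}$ such that for every $m\in\mathbb{N}$ and every subgroup $H$ of $G$ with $[G:H]\ge m$ (including infinite index) we have $\mu_n(H)\le\pi(\frac{1}{m})+\varepsilon$ for every $n\ge N$. For a probability measure $\mu$ on $G$, $\textup{dc}_\mu(G)=(\mu\times\mu)(\{(x,y):xy=yx\})$, and $\textup{dc}_M(G)=\limsup_{n\to\infty}\textup{dc}_{\mu_n}(G)$. *)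

theory Defs
  imports "HOL-Algebra.Generated_Groups" "HOL-Algebra.Coset"
          "HOL-Probability.Probability_Mass_Function"
          "HOL-Library.Extended_Real"
begin

definition index_ge :: "('a, 'b) monoid_scheme \<Rightarrow> 'a set \<Rightarrow> nat \<Rightarrow> bool" where
  "index_ge G H m \<longleftrightarrow> infinite (rcosets\<^bsub>G\<^esub> H) \<or> card (rcosets\<^bsub>G\<^esub> H) \<ge> m"

text \<open>A probability measure on (the countable, discrete group) G is a pmf supported in carrier G.\<close>
definition prob_on :: "('a, 'b) monoid_scheme \<Rightarrow> 'a pmf \<Rightarrow> bool" where
  "prob_on G \<mu> \<longleftrightarrow> set_pmf \<mu> \<subseteq> carrier G"

definition detects_index_uniformly ::
  "('a, 'b) monoid_scheme \<Rightarrow> (nat \<Rightarrow> 'a pmf) \<Rightarrow> (real \<Rightarrow> real) \<Rightarrow> bool" where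
  "detects_index_uniformly G \<mu> \<pi> \<longleftrightarrow>
     (\<forall>\<epsilon>>0. \<exists>N. \<forall>m::nat. m \<ge> 1 \<longrightarrow> (\<forall>H. subgroup H G \<and> index_ge G H m \<longrightarrow>
        (\<forall>n\<ge>N. measure_pmf.prob (\<mu> n) H \<le> \<pi> (1 / real m) + \<epsilon>)))"

definition dc :: "('a, 'b) monoid_scheme \<Rightarrow> 'a pmf \<Rightarrow> real" where
  "dc G \<mu> = measure_pmf.prob (pair_pmf \<mu> \<mu>) {(x, y). x \<otimes>\<^bsub>G\<^esub> y = y \<otimes>\<^bsub>G\<^esub> x}"

definition dc_seq :: "('a, 'b) monoid_scheme \<Rightarrow> (nat \<Rightarrow> 'a pmf) \<Rightarrow> ereal" where
  "dc_seq G \<mu> = limsup (\<lambda>n. ereal (dc G (\<mu> n)))"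

end

theory Submission
  imports Defs
begin

(* Choose K with \<pi>(1/K) < \<alpha>/8 and n with dc(\<mu>\<^sub>n) > \<alpha>/2 so late that every subgroup of
   \<mu>\<^sub>n-mass > \<alpha>/4 has index at most K. The elements whose centralizers have mass > \<alpha>/4 carry
   mass > \<alpha>/4, so they generate a subgroup Y of index at most K, and their centralizers all
   have index at most K. An r-generated group has boundedly many subgroups of index at most K
   (each is determined by the action of the generators on its labelled cosets), so the
   intersection D of these centralizers has bounded index, and D \<inter> Y is abelian because D
   centralizes the generators of Y. *)

definition index_le :: "('a, 'b) monoid_scheme \<Rightarrow> 'a set \<Rightarrow> nat \<Rightarrow> bool" where
  "index_le G H K \<longleftrightarrow> finite (rcosets\<^bsub>G\<^esub> H) \<and> card (rcosets\<^bsub>G\<^esub> H) \<le> K"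

lemma index_le_mono: "index_le G H a \<Longrightarrow> a \<le> b \<Longrightarrow> index_le G H b"
  by (simp add: index_le_def)

lemma (in group) index_le_pos: "subgroup H G \<Longrightarrow> index_le G H K \<Longrightarrow> 0 < K"
  using subgroup.subgroup_in_rcosets[OF _ is_group] card_gt_0_iff
  by (fastforce simp: index_le_def)

lemma (in group) r_coset_Int:
  assumes "subgroup H1 G" "subgroup H2 G" "a \<in> carrier G"
  shows "(H1 \<inter> H2) #> a = (H1 #> a) \<inter> (H2 #> a)"
proof
  show "(H1 #> a) \<inter> (H2 #> a) \<subseteq> (H1 \<inter> H2) #> a"
  proof
    fix x assume "x \<in> (H1 #> a) \<inter> (H2 #> a)"
    then obtain h1 h2 where h: "h1 \<in> H1" "h2 \<in> H2" "x = h1 \<otimes> a" "x = h2 \<otimes> a"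
      unfolding r_coset_def by blast
    then have "h1 = h2" using assms right_cancel subgroup.mem_carrier by metis
    then show "x \<in> (H1 \<inter> H2) #> a" using h unfolding r_coset_def by blast
  qed
qed (auto simp: r_coset_def)

lemma (in group) index_le_Int:
  assumes H1: "subgroup H1 G" and H2: "subgroup H2 G"
    and "index_le G H1 a" "index_le G H2 b"
  shows "index_le G (H1 \<inter> H2) (a * b)"
proof -
  let ?cap = "\<lambda>(A, B). A \<inter> B"
  have fin: "finite (rcosets H1)" "finite (rcosets H2)" using assms by (auto simp: index_le_def)
  have "rcosets (H1 \<inter> H2) \<subseteq> ?cap ` ((rcosets H1) \<times> (rcosets H2))"
  proof
    fix C assume "C \<in> rcosets (H1 \<inter> H2)"
    then obtain g where g: "g \<in> carrier G" "C = (H1 \<inter> H2) #> g" unfolding RCOSETS_def by blast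
    then have "C = ?cap (H1 #> g, H2 #> g)" using r_coset_Int[OF H1 H2] by simp
    moreover have "(H1 #> g, H2 #> g) \<in> (rcosets H1) \<times> (rcosets H2)"
      using g H1 H2 by (simp add: rcosetsI subgroup.subset)
    ultimately show "C \<in> ?cap ` ((rcosets H1) \<times> (rcosets H2))" by blast
  qed
  moreover have "finite (?cap ` ((rcosets H1) \<times> (rcosets H2)))" using fin by blast
  moreover have "card (?cap ` ((rcosets H1) \<times> (rcosets H2))) \<le> card (rcosets H1) * card (rcosets H2)"
    using card_image_le[of "(rcosets H1) \<times> (rcosets H2)" ?cap] fin by (simp add: card_cartesian_product)
  moreover have "card (rcosets H1) * card (rcosets H2) \<le> a * b"
    using assms by (simp add: index_le_def mult_le_mono)
  ultimately show ?thesis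
    unfolding index_le_def by (meson card_mono finite_subset le_trans)
qed

lemma (in group) index_le_carrier: "index_le G (carrier G) 1"
proof -
  have "rcosets (carrier G) = {carrier G}"
    unfolding RCOSETS_def using coset_join2[OF _ subgroup_self] by auto
  then show ?thesis by (simp add: index_le_def)
qed

lemma (in group) index_le_Inter:
  assumes "finite F" "\<And>H. H \<in> F \<Longrightarrow> subgroup H G \<and> index_le G H K"
  shows "subgroup (carrier G \<inter> \<Inter>F) G \<and> index_le G (carrier G \<inter> \<Inter>F) (K ^ card F)"
  using assms
proof (induction F rule: finite_induct)
  case empty
  then show ?case using subgroup_self index_le_carrier by simp
next
  case (insert H F)
  have "carrier G \<inter> \<Inter>(insert H F) = H \<inter> (carrier G \<inter> \<Inter>F)" by auto
  moreover have "K ^ card (insert H F) = K * K ^ card F" using insert.hyps by simp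
  ultimately show ?case
    using insert subgroups_Inter_pair index_le_Int by (metis insertCI)
qed

definition coset_action :: "('a, 'b) monoid_scheme \<Rightarrow> 'a set \<Rightarrow> ('a set \<Rightarrow> nat) \<Rightarrow> 'a \<Rightarrow> nat \<Rightarrow> nat" where
  "coset_action G H l g j = l (inv_into (rcosets\<^bsub>G\<^esub> H) l j #>\<^bsub>G\<^esub> g)"

context group
begin

lemma rcosets_mult_closed:
  assumes "subgroup H G" "A \<in> rcosets H" "g \<in> carrier G"
  shows "A #> g \<in> rcosets H"
proof -
  obtain a where a: "a \<in> carrier G" "A = H #> a" using assms(2) unfolding RCOSETS_def by blast
  then have "A #> g = H #> (a \<otimes> g)" using assms coset_mult_assoc subgroup.subset by metis
  then show ?thesis using a assms by (simp add: rcosetsI subgroup.subset)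
qed

context
  fixes H :: "'a set" and l :: "'a set \<Rightarrow> nat" and k :: nat
  assumes H: "subgroup H G" and l: "bij_betw l (rcosets H) {0..<k}"
begin

lemma coset_action_label:
  assumes "A \<in> rcosets H" "g \<in> carrier G"
  shows "coset_action G H l g (l A) = l (A #> g)"
  using assms l by (simp add: coset_action_def bij_betw_inv_into_left)

lemma inv_into_coset_label:
  assumes "j < k"
  shows "inv_into (rcosets H) l j \<in> rcosets H" "l (inv_into (rcosets H) l j) = j"
  using assms l bij_betw_inv_into_right[OF l] by (auto intro: inv_into_into simp: bij_betw_def)

lemma coset_action_closed:
  assumes "j < k" "g \<in> carrier G"
  shows "coset_action G H l g j < k"
  using inv_into_coset_label[OF assms(1)] rcosets_mult_closed[OF H _ assms(2)] l
  unfolding coset_action_def bij_betw_def by auto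

lemma coset_action_one:
  assumes "j < k"
  shows "coset_action G H l \<one> j = j"
  using inv_into_coset_label[OF assms] H unfolding coset_action_def
  by (simp add: subgroup.rcosets_carrier is_group)

lemma coset_action_mult:
  assumes "j < k" "g \<in> carrier G" "h \<in> carrier G"
  shows "coset_action G H l (g \<otimes> h) j = coset_action G H l h (coset_action G H l g j)"
proof -
  define A where "A = inv_into (rcosets H) l j"
  have A: "A \<in> rcosets H" "l A = j" using inv_into_coset_label[OF assms(1)] unfolding A_def by auto
  then have "A \<subseteq> carrier G" using H by (simp add: subgroup.rcosets_carrier is_group)
  then have "coset_action G H l (g \<otimes> h) j = l (A #> g #> h)"
    using assms by (simp add: coset_action_def A_def coset_mult_assoc)
  also have "\<dots> = coset_action G H l h (l (A #> g))"
    using A(1) assms(2,3) rcosets_mult_closed[OF H] by (simp add: coset_action_label)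
  also have "\<dots> = coset_action G H l h (coset_action G H l g j)"
    using coset_action_label[OF A(1) assms(2)] A(2) by simp
  finally show ?thesis .
qed

lemma mem_iff_coset_action_fixes:
  assumes "g \<in> carrier G"
  shows "g \<in> H \<longleftrightarrow> coset_action G H l g (l H) = l H"
proof -
  have "H \<in> rcosets H" using H by (simp add: subgroup.subgroup_in_rcosets is_group)
  moreover have "H #> g \<in> rcosets H" using H assms by (simp add: rcosetsI subgroup.subset)
  ultimately have "coset_action G H l g (l H) = l H \<longleftrightarrow> H #> g = H"
    using assms inj_on_eq_iff[OF bij_betw_imp_inj_on[OF l]] by (simp add: coset_action_label)
  also have "\<dots> \<longleftrightarrow> g \<in> H" using H assms coset_join1 coset_join2 by blast
  finally show ?thesis by simp
qed

end

lemma coset_actions_agree_on_generate: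
  assumes H1: "subgroup H1 G" and l1: "bij_betw l1 (rcosets H1) {0..<k}"
    and H2: "subgroup H2 G" and l2: "bij_betw l2 (rcosets H2) {0..<k}"
    and S: "S \<subseteq> carrier G"
    and agree: "\<And>s j. s \<in> S \<Longrightarrow> j < k \<Longrightarrow>
      coset_action G H1 l1 s j = coset_action G H2 l2 s j \<and>
      coset_action G H1 l1 (inv s) j = coset_action G H2 l2 (inv s) j"
    and "g \<in> generate G S" "j < k"
  shows "coset_action G H1 l1 g j = coset_action G H2 l2 g j"
  using assms(7,8)
proof (induction arbitrary: j rule: generate.induct)
  case one
  then show ?case by (simp add: coset_action_one[OF H1 l1] coset_action_one[OF H2 l2])
next
  case (incl h)
  then show ?case using agree by blast
next
  case (inv h)
  then show ?case using agree by blast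
next
  case (eng g h)
  have gh: "g \<in> carrier G" "h \<in> carrier G"
    using eng.hyps generate_in_carrier[OF S] by auto
  have "coset_action G H1 l1 (g \<otimes> h) j = coset_action G H1 l1 h (coset_action G H1 l1 g j)"
    using coset_action_mult[OF H1 l1 eng.prems gh] .
  also have "\<dots> = coset_action G H2 l2 h (coset_action G H2 l2 g j)"
    using eng.IH eng.prems coset_action_closed[OF H1 l1 eng.prems gh(1)] by metis
  also have "\<dots> = coset_action G H2 l2 (g \<otimes> h) j"
    using coset_action_mult[OF H2 l2 eng.prems gh] by simp
  finally show ?case .
qed

lemma subgroup_eq_if_coset_actions_agree:
  assumes H1: "subgroup H1 G" and l1: "bij_betw l1 (rcosets H1) {0..<k}"
    and H2: "subgroup H2 G" and l2: "bij_betw l2 (rcosets H2) {0..<k}"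
    and S: "S \<subseteq> carrier G" and gen: "generate G S = carrier G"
    and agree: "\<And>s j. s \<in> S \<Longrightarrow> j < k \<Longrightarrow>
      coset_action G H1 l1 s j = coset_action G H2 l2 s j \<and>
      coset_action G H1 l1 (inv s) j = coset_action G H2 l2 (inv s) j"
    and base: "l1 H1 = l2 H2"
  shows "H1 = H2"
proof -
  have "l1 H1 < k"
    using H1 l1 by (auto simp: bij_betw_def subgroup.subgroup_in_rcosets is_group)
  then have "coset_action G H1 l1 g (l1 H1) = coset_action G H2 l2 g (l2 H2)" if "g \<in> carrier G" for g
    using coset_actions_agree_on_generate[OF H1 l1 H2 l2 S agree] that gen base by metis
  then have "g \<in> H1 \<longleftrightarrow> g \<in> H2" if "g \<in> carrier G" for g
    using that base mem_iff_coset_action_fixes[OF H1 l1] mem_iff_coset_action_fixes[OF H2 l2] by metis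
  then show ?thesis using H1 H2 subgroup.subset by blast
qed

end

definition subgroup_codes :: "nat \<Rightarrow> nat \<Rightarrow> (nat \<times> nat \<times> (nat \<times> nat \<Rightarrow> nat) \<times> (nat \<times> nat \<Rightarrow> nat)) set" where
  "subgroup_codes r K = {0..K} \<times> {0..<K} \<times>
     (({0..<r} \<times> {0..<K}) \<rightarrow>\<^sub>E {0..<K}) \<times> (({0..<r} \<times> {0..<K}) \<rightarrow>\<^sub>E {0..<K})"

lemma finite_subgroup_codes: "finite (subgroup_codes r K)"
  unfolding subgroup_codes_def by (intro finite_cartesian_product finite_PiE) auto

definition coset_labelling :: "('a, 'b) monoid_scheme \<Rightarrow> 'a set \<Rightarrow> 'a set \<Rightarrow> nat" where
  "coset_labelling G H = (SOME l. bij_betw l (rcosets\<^bsub>G\<^esub> H) {0..<card (rcosets\<^bsub>G\<^esub> H)})"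

definition action_table ::
    "('a, 'b) monoid_scheme \<Rightarrow> 'a set \<Rightarrow> nat \<Rightarrow> nat \<Rightarrow> (nat \<Rightarrow> 'a) \<Rightarrow> nat \<times> nat \<Rightarrow> nat" where
  "action_table G H r K x = (\<lambda>(i, j) \<in> {0..<r} \<times> {0..<K}.
     if j < card (rcosets\<^bsub>G\<^esub> H) then coset_action G H (coset_labelling G H) (x i) j else 0)"

text \<open>A subgroup of index \<open>k \<le> K\<close> is encoded by \<open>k\<close>, the label of the trivial coset and the
  tables of the actions of the generators \<open>e i\<close> and of their inverses on the coset labels.\<close>
definition subgroup_code ::
    "('a, 'b) monoid_scheme \<Rightarrow> nat \<Rightarrow> nat \<Rightarrow> (nat \<Rightarrow> 'a) \<Rightarrow> 'a set \<Rightarrow>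
       nat \<times> nat \<times> (nat \<times> nat \<Rightarrow> nat) \<times> (nat \<times> nat \<Rightarrow> nat)" where
  "subgroup_code G r K e H = (card (rcosets\<^bsub>G\<^esub> H), coset_labelling G H H,
     action_table G H r K e, action_table G H r K (\<lambda>i. inv\<^bsub>G\<^esub> e i))"

context group
begin

lemma bij_coset_labelling:
  "finite (rcosets H) \<Longrightarrow> bij_betw (coset_labelling G H) (rcosets H) {0..<card (rcosets H)}"
  unfolding coset_labelling_def by (rule someI_ex[OF ex_bij_betw_finite_nat])

lemma coset_labelling_self_less:
  assumes "subgroup H G" "finite (rcosets H)"
  shows "coset_labelling G H H < card (rcosets H)"
  using bij_coset_labelling[OF assms(2)] assms(1)
  by (auto simp: bij_betw_def subgroup.subgroup_in_rcosets is_group)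

lemma action_table_in_PiE:
  assumes H: "subgroup H G" "index_le G H K" and x: "x ` {0..<r} \<subseteq> carrier G"
  shows "action_table G H r K x \<in> ({0..<r} \<times> {0..<K}) \<rightarrow>\<^sub>E {0..<K}"
proof -
  have fin: "finite (rcosets H)" and le: "card (rcosets H) \<le> K" using H(2) by (auto simp: index_le_def)
  note l = bij_coset_labelling[OF fin]
  have "coset_action G H (coset_labelling G H) (x i) j < K" if "i < r" "j < card (rcosets H)" for i j
  proof -
    have "x i \<in> carrier G" using that(1) x by auto
    then show ?thesis using coset_action_closed[OF H(1) l that(2)] le by (meson less_le_trans)
  qed
  moreover have "0 < K" using coset_labelling_self_less[OF H(1) fin] le by linarith
  ultimately show ?thesis unfolding action_table_def restrict_PiE_iff by auto
qed

lemma subgroup_code_in_subgroup_codes: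
  assumes e: "e ` {0..<r} \<subseteq> carrier G" and H: "subgroup H G" "index_le G H K"
  shows "subgroup_code G r K e H \<in> subgroup_codes r K"
proof -
  have "(\<lambda>i. inv (e i)) ` {0..<r} \<subseteq> carrier G" using e by auto
  then show ?thesis
    using action_table_in_PiE[OF H e] action_table_in_PiE[OF H] coset_labelling_self_less[OF H(1)] H(2)
    by (simp add: subgroup_code_def subgroup_codes_def index_le_def)
qed

lemma inj_on_subgroup_code:
  assumes e: "e ` {0..<r} \<subseteq> carrier G" and gen: "generate G (e ` {0..<r}) = carrier G"
  shows "inj_on (subgroup_code G r K e) {H. subgroup H G \<and> index_le G H K}"
proof (rule inj_onI, clarify)
  fix H1 H2 assume H1: "subgroup H1 G" "index_le G H1 K" and H2: "subgroup H2 G" "index_le G H2 K"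
    and eq: "subgroup_code G r K e H1 = subgroup_code G r K e H2"
  define k where "k = card (rcosets H1)"
  have k: "card (rcosets H2) = k" "k \<le> K"
    using eq H1(2) by (auto simp: subgroup_code_def k_def index_le_def)
  have l1: "bij_betw (coset_labelling G H1) (rcosets H1) {0..<k}"
    using bij_coset_labelling H1(2) by (simp add: k_def index_le_def)
  have l2: "bij_betw (coset_labelling G H2) (rcosets H2) {0..<k}"
    using bij_coset_labelling[of H2] H2(2) by (simp add: k index_le_def)
  have agree: "coset_action G H1 (coset_labelling G H1) s j = coset_action G H2 (coset_labelling G H2) s j \<and>
      coset_action G H1 (coset_labelling G H1) (inv s) j = coset_action G H2 (coset_labelling G H2) (inv s) j"
    if s: "s \<in> e ` {0..<r}" and j: "j < k" for s j
  proof -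
    obtain i where i: "i < r" "s = e i" using s by auto
    have "action_table G H1 r K e (i, j) = action_table G H2 r K e (i, j)"
      "action_table G H1 r K (\<lambda>i. inv (e i)) (i, j) = action_table G H2 r K (\<lambda>i. inv (e i)) (i, j)"
      using eq by (simp_all add: subgroup_code_def)
    then show ?thesis using i j k by (simp add: action_table_def k_def)
  qed
  have "coset_labelling G H1 H1 = coset_labelling G H2 H2" using eq by (simp add: subgroup_code_def)
  then show "H1 = H2" using subgroup_eq_if_coset_actions_agree[OF H1(1) l1 H2(1) l2 e gen agree] by blast
qed

lemma generating_family_of_finite_generating_set:
  assumes "S \<subseteq> carrier G" "finite S" "card S \<le> r" "generate G S = carrier G"
  obtains e where "e ` {0..<r} \<subseteq> carrier G" "generate G (e ` {0..<r}) = carrier G"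
proof -
  obtain e0 where e0: "bij_betw e0 {0..<card S} S" using ex_bij_betw_nat_finite[OF assms(2)] by blast
  define e where "e i = (if i < card S then e0 i else \<one>)" for i
  have "S \<subseteq> e ` {0..<r}"
  proof
    fix s assume "s \<in> S"
    then obtain i where "i < card S" "s = e0 i" using e0 by (force simp: bij_betw_def)
    then show "s \<in> e ` {0..<r}" using assms(3) unfolding e_def by force
  qed
  moreover have "e ` {0..<r} \<subseteq> carrier G"
    using e0 assms(1) by (auto simp: e_def bij_betw_def)
  ultimately have "generate G (e ` {0..<r}) = carrier G"
    using mono_generate[of S "e ` {0..<r}"] generate_incl[of "e ` {0..<r}"] assms(4) by blast
  with \<open>e ` {0..<r} \<subseteq> carrier G\<close> show ?thesis by (rule that)
qed

lemma finite_bounded_index_subgroups: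
  assumes e: "e ` {0..<r} \<subseteq> carrier G" and gen: "generate G (e ` {0..<r}) = carrier G"
  shows "finite {H. subgroup H G \<and> index_le G H K}"
    and "card {H. subgroup H G \<and> index_le G H K} \<le> card (subgroup_codes r K)"
proof -
  let ?\<H> = "{H. subgroup H G \<and> index_le G H K}"
  have "subgroup_code G r K e ` ?\<H> \<subseteq> subgroup_codes r K"
    using subgroup_code_in_subgroup_codes[OF e] by blast
  note code = inj_on_subgroup_code[OF e gen] this finite_subgroup_codes
  show "finite ?\<H>" by (rule inj_on_finite[OF code])
  show "card ?\<H> \<le> card (subgroup_codes r K)" by (rule card_inj_on_le[OF code])
qed

end

definition centralizer :: "('a, 'b) monoid_scheme \<Rightarrow> 'a \<Rightarrow> 'a set" where
  "centralizer G x = {y \<in> carrier G. x \<otimes>\<^bsub>G\<^esub> y = y \<otimes>\<^bsub>G\<^esub> x}"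

lemma (in group) subgroup_centralizer:
  assumes x: "x \<in> carrier G"
  shows "subgroup (centralizer G x) G"
proof (rule subgroupI)
  fix a assume "a \<in> centralizer G x"
  then have a: "a \<in> carrier G" "x \<otimes> a = a \<otimes> x" by (auto simp: centralizer_def)
  have "x \<otimes> inv a = inv a \<otimes> (a \<otimes> x) \<otimes> inv a" using a x by (simp add: m_assoc[symmetric])
  also have "\<dots> = inv a \<otimes> x" using a x by (simp flip: a(2) add: m_assoc)
  finally show "inv a \<in> centralizer G x" using a by (simp add: centralizer_def)
next
  fix a b assume "a \<in> centralizer G x" "b \<in> centralizer G x"
  then show "a \<otimes> b \<in> centralizer G x"
    using x by (auto simp: centralizer_def) (metis m_assoc)
qed (use x in \<open>auto simp: centralizer_def\<close>)

lemma (in group) commute_generate: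
  assumes "a \<in> carrier G" "\<And>x. x \<in> X \<Longrightarrow> x \<in> centralizer G a" "y \<in> generate G X"
  shows "a \<otimes> y = y \<otimes> a"
  using generate_subgroup_incl[OF _ subgroup_centralizer] assms by (auto simp: centralizer_def)

lemma measure_pair_pmf_le_large_sections:
  fixes \<mu> :: "'a pmf" and R :: "'a \<Rightarrow> 'a \<Rightarrow> bool" and t :: real
  assumes "t \<ge> 0"
  shows "measure_pmf.prob (pair_pmf \<mu> \<mu>) {(x, y). R x y}
           \<le> measure_pmf.prob \<mu> {x. measure_pmf.prob \<mu> {y. R x y} > t} + t"
proof -
  define X where "X = {x. measure_pmf.prob \<mu> {y. R x y} > t}"
  have "emeasure (pair_pmf \<mu> \<mu>) {(x, y). R x y} = (\<integral>\<^sup>+x. emeasure \<mu> {y. R x y} \<partial>\<mu>)"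
    by (simp add: nn_integral_pair_pmf' flip: nn_integral_indicator) (simp add: indicator_def)
  also have "\<dots> \<le> (\<integral>\<^sup>+x. indicator X x + ennreal t \<partial>\<mu>)"
  proof (rule nn_integral_mono)
    fix x
    show "emeasure \<mu> {y. R x y} \<le> indicator X x + ennreal t"
    proof (cases "x \<in> X")
      case True
      then show ?thesis using measure_pmf.emeasure_le_1[of \<mu>] by (simp add: add_increasing2)
    next
      case False
      then show ?thesis by (simp add: X_def measure_pmf.emeasure_eq_measure ennreal_leI)
    qed
  qed
  also have "\<dots> = emeasure \<mu> X + ennreal t"
    by (simp add: nn_integral_add measure_pmf.emeasure_space_1)
  finally show ?thesis
    using assms by (simp add: X_def measure_pmf.emeasure_eq_measure flip: ennreal_plus)
qed

lemma (in group) dc_le_prob_large_centralizers: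
  assumes supp: "set_pmf \<mu> \<subseteq> carrier G" and "t \<ge> 0"
  shows "dc G \<mu> \<le> measure_pmf.prob \<mu> {x \<in> carrier G. measure_pmf.prob \<mu> (centralizer G x) > t} + t"
proof -
  have carrier_Int: "measure_pmf.prob \<mu> (carrier G \<inter> A) = measure_pmf.prob \<mu> A" for A
    using supp measure_Int_set_pmf[of \<mu> A] measure_Int_set_pmf[of \<mu> "carrier G \<inter> A"]
    by (metis Int_absorb1 Int_assoc Int_commute)
  have "dc G \<mu> \<le> measure_pmf.prob \<mu> {x. measure_pmf.prob \<mu> {y. x \<otimes> y = y \<otimes> x} > t} + t"
    unfolding dc_def by (rule measure_pair_pmf_le_large_sections) fact
  also have "{x. measure_pmf.prob \<mu> {y. x \<otimes> y = y \<otimes> x} > t} =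
      {x. measure_pmf.prob \<mu> (centralizer G x) > t}"
    unfolding centralizer_def using carrier_Int by (simp add: Collect_conj_eq)
  finally show ?thesis
    using carrier_Int[of "{x. measure_pmf.prob \<mu> (centralizer G x) > t}"] by (simp add: Collect_conj_eq)
qed

lemma (in group) abelian_subgroup_of_bounded_index:
  assumes e: "e ` {0..<r} \<subseteq> carrier G" and gen: "generate G (e ` {0..<r}) = carrier G"
    and supp: "set_pmf \<mu> \<subseteq> carrier G" and "t \<ge> 0"
    and large: "\<And>H. subgroup H G \<Longrightarrow> measure_pmf.prob \<mu> H > t \<Longrightarrow> index_le G H K"
    and dc: "dc G \<mu> > 2 * t"
  shows "\<exists>A. subgroup A G \<and> (\<forall>x\<in>A. \<forall>y\<in>A. x \<otimes> y = y \<otimes> x) \<and>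
           index_le G A (K ^ card (subgroup_codes r K) * K)"
proof -
  define X where "X = {x \<in> carrier G. measure_pmf.prob \<mu> (centralizer G x) > t}"
  define Y where "Y = generate G X"
  define D where "D = carrier G \<inter> \<Inter>(centralizer G ` X)"
  let ?\<H> = "{H. subgroup H G \<and> index_le G H K}"
  have X: "X \<subseteq> carrier G" by (auto simp: X_def)
  have Y: "subgroup Y G" unfolding Y_def using X by (rule generate_is_subgroup)
  have "t < measure_pmf.prob \<mu> X"
    using dc_le_prob_large_centralizers[OF supp \<open>t \<ge> 0\<close>] dc by (simp add: X_def)
  also have "\<dots> \<le> measure_pmf.prob \<mu> Y"
    unfolding Y_def by (rule measure_pmf.finite_measure_mono) (auto intro: generate.incl)
  finally have Y_index: "index_le G Y K" using large[OF Y] by blast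
  have "centralizer G ` X \<subseteq> ?\<H>"
    using large subgroup_centralizer X_def by blast
  then have "finite (centralizer G ` X)" "card (centralizer G ` X) \<le> card (subgroup_codes r K)"
    using finite_bounded_index_subgroups[OF e gen, of K] finite_subset card_mono le_trans by metis+
  moreover have "0 < K" using index_le_pos[OF Y Y_index] .
  ultimately have "K ^ card (centralizer G ` X) \<le> K ^ card (subgroup_codes r K)"
    by (simp add: power_increasing)
  with index_le_Inter[of "centralizer G ` X" K] \<open>centralizer G ` X \<subseteq> ?\<H>\<close> \<open>finite (centralizer G ` X)\<close>
  have D: "subgroup D G" "index_le G D (K ^ card (subgroup_codes r K))"
    unfolding D_def by (auto intro: index_le_mono)
  have "a \<otimes> b = b \<otimes> a" if a: "a \<in> D" and b: "b \<in> Y" for a b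
  proof (rule commute_generate)
    show "a \<in> carrier G" using a by (simp add: D_def)
    show "b \<in> generate G X" using b by (simp add: Y_def)
    show "x \<in> centralizer G a" if "x \<in> X" for x
      using a that X by (auto simp: D_def centralizer_def)
  qed
  then show ?thesis
    using subgroups_Inter_pair[OF D(1) Y] index_le_Int[OF D(1) Y D(2) Y_index] by blast
qed

lemma obtain_inverse_nat_small:
  fixes \<pi> :: "real \<Rightarrow> real"
  assumes "(\<pi> \<longlongrightarrow> 0) (at_right 0)" "\<epsilon> > 0"
  obtains m :: nat where "m \<ge> 1" "\<pi> (1 / real m) < \<epsilon>"
proof -
  have "filterlim (\<lambda>m. 1 / real m) (at_right 0) sequentially"
    by (rule tendsto_imp_filterlim_at_right[OF lim_inverse_n'])
      (auto simp: eventually_sequentially intro: exI[of _ 1])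
  then have "((\<lambda>m. \<pi> (1 / real m)) \<longlongrightarrow> 0) sequentially"
    by (rule filterlim_compose[OF assms(1)])
  then have "eventually (\<lambda>m. \<pi> (1 / real m) < \<epsilon>) sequentially"
    using assms(2) by (rule order_tendstoD(2))
  then obtain M where M: "\<And>m. m \<ge> M \<Longrightarrow> \<pi> (1 / real m) < \<epsilon>"
    unfolding eventually_sequentially by blast
  show ?thesis using that[of "Suc M"] M[of "Suc M"] by simp
qed

lemma large_subgroups_have_small_index:
  assumes "detects_index_uniformly G \<mu> \<pi>" "\<epsilon> > 0"
  obtains N where "\<And>n m H. n \<ge> N \<Longrightarrow> m \<ge> 1 \<Longrightarrow> subgroup H G \<Longrightarrow>
    measure_pmf.prob (\<mu> n) H > \<pi> (1 / real m) + \<epsilon> \<Longrightarrow> index_le G H m"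
proof -
  obtain N where N: "\<And>n m H. n \<ge> N \<Longrightarrow> m \<ge> 1 \<Longrightarrow> subgroup H G \<Longrightarrow> index_ge G H m \<Longrightarrow>
      measure_pmf.prob (\<mu> n) H \<le> \<pi> (1 / real m) + \<epsilon>"
    using assms unfolding detects_index_uniformly_def by meson
  show ?thesis
  proof (rule that, rule ccontr)
    fix n m H assume "n \<ge> N" "m \<ge> 1" "subgroup H G" "measure_pmf.prob (\<mu> n) H > \<pi> (1 / real m) + \<epsilon>"
      and "\<not> index_le G H m"
    then show False using N[of n m H] by (auto simp: index_ge_def index_le_def)
  qed
qed

lemma frequently_dc_gt:
  assumes "ereal \<alpha> \<le> dc_seq G \<mu>" "\<beta> < \<alpha>"
  shows "\<exists>n\<ge>N. dc G (\<mu> n) > \<beta>"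
proof (rule ccontr)
  assume "\<not> (\<exists>n\<ge>N. dc G (\<mu> n) > \<beta>)"
  then have "eventually (\<lambda>n. ereal (dc G (\<mu> n)) \<le> ereal \<beta>) sequentially"
    by (auto simp: eventually_sequentially not_less)
  then have "dc_seq G \<mu> \<le> ereal \<beta>" unfolding dc_seq_def by (rule Limsup_bounded)
  then have "ereal \<alpha> \<le> ereal \<beta>" using assms(1) by (rule order_trans[rotated])
  then show False using assms(2) by simp
qed

theorem theorem1p10:
  fixes r :: nat and \<pi> :: "real \<Rightarrow> real" and \<alpha> :: real
  assumes "\<forall>\<gamma>\<in>{0<..1}. \<pi> \<gamma> \<in> {0<..1}"
    and "mono_on {0<..1} \<pi>"
    and "(\<pi> \<longlongrightarrow> 0) (at_right 0)"
    and "\<alpha> > 0"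
  shows "\<exists>C::nat. \<forall>(G :: nat monoid) (\<mu> :: nat \<Rightarrow> nat pmf).
           group G \<longrightarrow>
           (\<exists>S. S \<subseteq> carrier G \<and> finite S \<and> card S \<le> r \<and> generate G S = carrier G) \<longrightarrow>
           (\<forall>n. prob_on G (\<mu> n)) \<longrightarrow>
           detects_index_uniformly G \<mu> \<pi> \<longrightarrow>
           dc_seq G \<mu> \<ge> ereal \<alpha> \<longrightarrow>
           (\<exists>H. subgroup H G \<and> (\<forall>x\<in>H. \<forall>y\<in>H. x \<otimes>\<^bsub>G\<^esub> y = y \<otimes>\<^bsub>G\<^esub> x) \<and>
                finite (rcosets\<^bsub>G\<^esub> H) \<and> card (rcosets\<^bsub>G\<^esub> H) \<le> C)"
proof -
  have "\<alpha> / 8 > 0" using assms(4) by simp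
  obtain K :: nat where K: "K \<ge> 1" "\<pi> (1 / real K) < \<alpha> / 8"
    by (rule obtain_inverse_nat_small[OF assms(3) \<open>\<alpha> / 8 > 0\<close>])
  show ?thesis
  proof (intro exI[of _ "K ^ card (subgroup_codes r K) * K"] allI impI)
    fix G :: "nat monoid" and \<mu> :: "nat \<Rightarrow> nat pmf"
    assume "group G" and gen: "\<exists>S. S \<subseteq> carrier G \<and> finite S \<and> card S \<le> r \<and> generate G S = carrier G"
      and supp: "\<forall>n. prob_on G (\<mu> n)" and det: "detects_index_uniformly G \<mu> \<pi>"
      and dc: "ereal \<alpha> \<le> dc_seq G \<mu>"
    interpret group G by fact
    obtain e where e: "e ` {0..<r} \<subseteq> carrier G" "generate G (e ` {0..<r}) = carrier G"
      using gen generating_family_of_finite_generating_set by blast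
    obtain N where N: "\<And>n m H. n \<ge> N \<Longrightarrow> m \<ge> 1 \<Longrightarrow> subgroup H G \<Longrightarrow>
        measure_pmf.prob (\<mu> n) H > \<pi> (1 / real m) + \<alpha> / 8 \<Longrightarrow> index_le G H m"
      using large_subgroups_have_small_index[OF det \<open>\<alpha> / 8 > 0\<close>] by blast
    obtain n where n: "n \<ge> N" "dc G (\<mu> n) > 2 * (\<alpha> / 4)"
      using frequently_dc_gt[OF dc, of "\<alpha> / 2"] assms(4) by auto
    have "index_le G H K" if "subgroup H G" "measure_pmf.prob (\<mu> n) H > \<alpha> / 4" for H
      using N[OF n(1) K(1) that(1)] that(2) K(2) by linarith
    moreover have "set_pmf (\<mu> n) \<subseteq> carrier G" "\<alpha> / 4 \<ge> 0"
      using supp assms(4) by (auto simp: prob_on_def)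
    ultimately show "\<exists>H. subgroup H G \<and> (\<forall>x\<in>H. \<forall>y\<in>H. x \<otimes>\<^bsub>G\<^esub> y = y \<otimes>\<^bsub>G\<^esub> x) \<and>
        finite (rcosets\<^bsub>G\<^esub> H) \<and> card (rcosets\<^bsub>G\<^esub> H) \<le> K ^ card (subgroup_codes r K) * K"
      using abelian_subgroup_of_bounded_index[OF e _ _ _ n(2)] unfolding index_le_def by blast
  qed
qed

end
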